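(* Let $m\ge3$ be odd and suppose $B,D\subseteq\mathbb{Z}_m$ are $2$-$\{m;k,r;k+r-\frac{m+1}{2}\}$ ASDS with $0\notin B$ and $m-1\notin D$. Then \[ \frac{(m-1)^2}{2}\le (k+r)m-(k^2+r^2)\le\frac{m^2-1}{2}. \]
   Context: For $B,D\subseteq\mathbb{Z}_m$ and $a\in\mathbb{Z}_m\setminus\{0\}$, let $N_{B,D}(a)=|\{(x,x')\in B\times B: x-x'\equiv a\}|+|\{(y,y')\in D\times D: y-y'\equiv a\}|$. For an integer $\mu$, $B$ and $D$ are $2$-$\{m;k,r;\mu\}$ ASDS if $|B|=k$, $|D|=r$ and $N_{B,D}(a)\in\{\mu,\mu+1\}$ for every $a\in\mathbb{Z}_m\setminus\{0\}$. *)

theory Defs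
  imports Main
begin

text \<open>Z_m is modelled as the integers {0..<m}; a subset of Z_m is a set B \<subseteq> {0..<m}.
  N_{B,D}(a) counts ordered pairs with difference congruent to a modulo m.\<close>

definition N_BD :: "int \<Rightarrow> int set \<Rightarrow> int set \<Rightarrow> int \<Rightarrow> nat" where
  "N_BD m B D a =
     card {(x, x'). x \<in> B \<and> x' \<in> B \<and> (x - x') mod m = a mod m}
   + card {(y, y'). y \<in> D \<and> y' \<in> D \<and> (y - y') mod m = a mod m}"

definition is_ASDS2 :: "int \<Rightarrow> nat \<Rightarrow> nat \<Rightarrow> int \<Rightarrow> int set \<Rightarrow> int set \<Rightarrow> bool" where
  "is_ASDS2 m k r \<mu> B D \<longleftrightarrow>
     B \<subseteq> {0..<m} \<and> D \<subseteq> {0..<m} \<and> card B = k \<and> card D = r \<and>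
     (\<forall>a \<in> {1..<m}. int (N_BD m B D a) = \<mu> \<or> int (N_BD m B D a) = \<mu> + 1)"

end

theory Submission
  imports Defs
begin

text \<open>Each ordered pair of distinct elements of B contributes to exactly one nonzero
  difference a, so summing N_{B,D}(a) over all a \<noteq> 0 gives k(k-1) + r(r-1). Since every
  summand lies in {\<mu>, \<mu>+1}, this sum lies between (m-1)\<mu> and (m-1)(\<mu>+1); with
  \<mu> = k + r - (m+1)/2 these two bounds are the claimed inequalities.\<close>

lemma card_eq_sum_card_fibres:
  assumes "finite A" "finite T" "f ` A \<subseteq> T"
  shows "card A = (\<Sum>y\<in>T. card {x\<in>A. f x = y})"
  using sum.group[OF assms, of "\<lambda>_. 1 :: nat"] by simp

lemma eq_if_diff_mod_eq_0:
  fixes x x' m :: int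
  assumes "x \<in> {0..<m}" "x' \<in> {0..<m}" "(x - x') mod m = 0"
  shows "x = x'"
proof -
  have "x mod m = x' mod m"
    using assms(3) by (simp add: mod_eq_dvd_iff mod_eq_0_iff_dvd)
  with assms(1,2) show ?thesis by simp
qed

lemma sum_card_pairs_with_difference:
  fixes m :: int and B :: "int set"
  assumes "B \<subseteq> {0..<m}"
  shows "(\<Sum>a\<in>{1..<m}. card {(x, x'). x \<in> B \<and> x' \<in> B \<and> (x - x') mod m = a mod m})
         = card B * (card B - 1)"
proof -
  have fin: "finite B" using assms finite_subset by blast
  define P where "P = B \<times> B - (\<lambda>x. (x, x)) ` B"
  define diff where "diff = (\<lambda>(x, x'). (x - x') mod m)"
  have card_P: "card P = card B * (card B - 1)"
  proof -
    have "card ((\<lambda>x. (x, x)) ` B) = card B" by (rule card_image) (auto simp: inj_on_def)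
    then show ?thesis
      unfolding P_def using fin
      by (simp add: card_Diff_subset card_cartesian_product image_subset_iff diff_mult_distrib2)
  qed
  have diff_P: "diff ` P \<subseteq> {1..<m}"
  proof
    fix a assume "a \<in> diff ` P"
    then obtain x x' where "x \<in> B" "x' \<in> B" "x \<noteq> x'" and a: "a = (x - x') mod m"
      unfolding P_def diff_def by auto
    with assms have "x \<in> {0..<m}" "x' \<in> {0..<m}" by auto
    with \<open>x \<noteq> x'\<close> a have "a \<noteq> 0" "m > 0" using eq_if_diff_mod_eq_0[of x m x'] by auto
    moreover have "0 \<le> a" "a < m" using a \<open>m > 0\<close> by simp_all
    ultimately show "a \<in> {1..<m}" by simp
  qed
  have fibre: "{p\<in>P. diff p = a} = {(x, x'). x \<in> B \<and> x' \<in> B \<and> (x - x') mod m = a mod m}"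
    if "a \<in> {1..<m}" for a
    using that unfolding P_def diff_def by auto
  have "card P = (\<Sum>a\<in>{1..<m}. card {p\<in>P. diff p = a})"
    by (rule card_eq_sum_card_fibres) (use fin diff_P in \<open>auto simp: P_def\<close>)
  with card_P fibre show ?thesis by simp
qed

lemma sum_N_BD:
  assumes "B \<subseteq> {0..<m}" "D \<subseteq> {0..<m}"
  shows "(\<Sum>a\<in>{1..<m}. N_BD m B D a) = card B * (card B - 1) + card D * (card D - 1)"
  unfolding N_BD_def sum.distrib
  using sum_card_pairs_with_difference[OF assms(1)] sum_card_pairs_with_difference[OF assms(2)]
  by simp

lemma ASDS2_pair_count_bounds:
  assumes "m \<ge> 1" "is_ASDS2 m k r \<mu> B D"
  shows "(m - 1) * \<mu> \<le> int k * (int k - 1) + int r * (int r - 1)"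
    and "int k * (int k - 1) + int r * (int r - 1) \<le> (m - 1) * (\<mu> + 1)"
proof -
  have sets: "B \<subseteq> {0..<m}" "D \<subseteq> {0..<m}" "card B = k" "card D = r"
    and N_range: "\<And>a. a \<in> {1..<m} \<Longrightarrow> \<mu> \<le> int (N_BD m B D a) \<and> int (N_BD m B D a) \<le> \<mu> + 1"
    using assms(2) unfolding is_ASDS2_def by force+
  have pairs: "int (n * (n - 1)) = int n * (int n - 1)" for n :: nat
    by (cases n) (auto simp: algebra_simps)
  have total: "(\<Sum>a\<in>{1..<m}. int (N_BD m B D a)) = int k * (int k - 1) + int r * (int r - 1)"
    using sum_N_BD[OF sets(1,2)] sets(3,4) pairs by (metis of_nat_add of_nat_sum)
  have card_range: "int (card {1..<m}) = m - 1" using assms(1) by simp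
  have "(\<Sum>a\<in>{1..<m}. \<mu>) \<le> (\<Sum>a\<in>{1..<m}. int (N_BD m B D a))"
    by (rule sum_mono) (use N_range in blast)
  then show "(m - 1) * \<mu> \<le> int k * (int k - 1) + int r * (int r - 1)"
    using total card_range by simp
  have "(\<Sum>a\<in>{1..<m}. int (N_BD m B D a)) \<le> (\<Sum>a\<in>{1..<m}. \<mu> + 1)"
    by (rule sum_mono) (use N_range in blast)
  then show "int k * (int k - 1) + int r * (int r - 1) \<le> (m - 1) * (\<mu> + 1)"
    using total card_range by simp
qed

theorem corollary5:
  fixes m :: int and k r :: nat and B D :: "int set"
  assumes "m \<ge> 3" and "odd m"
    and "is_ASDS2 m k r (int k + int r - (m + 1) div 2) B D"
    and "0 \<notin> B" and "m - 1 \<notin> D"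
  shows "(m - 1)^2 \<le> 2 * ((int k + int r) * m - (int k ^ 2 + int r ^ 2))
    \<and> 2 * ((int k + int r) * m - (int k ^ 2 + int r ^ 2)) \<le> m^2 - 1"
proof -
  obtain t where t: "m = 2 * t + 1" using assms(2) oddE by blast
  have \<mu>: "int k + int r - (m + 1) div 2 = int k + int r - (t + 1)" unfolding t by simp
  have "m \<ge> 1" using assms(1) by simp
  note bounds = ASDS2_pair_count_bounds[OF this assms(3), unfolded \<mu>]
  show ?thesis
    using bounds unfolding t by (simp add: power2_eq_square algebra_simps)
qed

end
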